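(* Consider a two-player bilinear game with $f_1(x_1,x_2)=x_1^\top Ax_2$, $f_2(x_1,x_2)=x_1^\top B^\top x_2$, $A\in\mathbb{R}^{n_1\times n_2}$, $B\in\mathbb{R}^{n_2\times n_1}$, step sizes $\gamma_1,\gamma_2>0$, and let $W$ be either $W_s$ (simultaneous gradient play) or $W_a$ (alternating gradient play) as defined in the context. Write $a_{pq}$, $b_{pq}$ for the $(p,q)$ entries of $A$, $B$. (1) If $i\neq j$ and coordinate $x_{1,j}$ is disturbance decoupled from coordinate $x_{1,i}$, then $\sum_{\ell=1}^{n_2}b_{\ell i}a_{j\ell}=0$. (2) If $i\neq j$ and coordinate $x_{2,j}$ is disturbance decoupled from coordinate $x_{2,i}$, then $\sum_{\ell=1}^{n_1}b_{j\ell}a_{\ell i}=0$.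
   Context: Player 1 has action $x_1=(x_{1,1},\ldots,x_{1,n_1})\in\mathbb{R}^{n_1}$, player 2 has $x_2=(x_{2,1},\ldots,x_{2,n_2})\in\mathbb{R}^{n_2}$; the joint vector $x=(x_1,x_2)\in\mathbb{R}^{n_1+n_2}$. Simultaneous gradient play $x_1^{k+1}=x_1^k-\gamma_1Ax_2^k$, $x_2^{k+1}=x_2^k-\gamma_2Bx_1^k$ is the linear iteration $x^{k+1}=W_sx^k$ with $W_s=\begin{bmatrix}I&-\gamma_1A\\-\gamma_2B&I\end{bmatrix}$. Alternating gradient play $x_1^{k+1}=x_1^k-\gamma_1Ax_2^k$, $x_2^{k+1}=x_2^k-\gamma_2Bx_1^{k+1}$ is the linear iteration $x^{k+1}=W_ax^k$ with $W_a=\begin{bmatrix}I&-\gamma_1A\\-\gamma_2B&I+\gamma_1\gamma_2BA\end{bmatrix}$. Each coordinate is treated as a separate scalar player whose game-graph matrix is $W$. For coordinates $p\neq q$ of $\mathbb{R}^{n_1+n_2}$, with $\gamma_{(q)}$ the step size of the player owning coordinate $q$, coordinate $p$ is disturbance decoupled from coordinate $q$ if for every initial $x^0$ and every real sequence $(\delta^k)_{k\ge0}$, the iterations $x^{k+1}=Wx^k$ and $y^{k+1}=Wy^k-\gamma_{(q)}\delta^ke_q$ with $y^0=x^0$ satisfy $y^k_p=x^k_p$ for all $k\ge0$ ($e_q$ the $q$-th standard basis vector). *)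

theory Defs
  imports "HOL-Analysis.Analysis"
begin

text \<open>Joint coordinates are indexed by the sum type 'n1 + 'n2: Inl i is x_{1,i}, Inr l is x_{2,l}.
  A :: real^'n2^'n1 (A $ i $ l = a_{il}), B :: real^'n1^'n2 (B $ l $ i = b_{li}).\<close>

definition W_sim :: "real \<Rightarrow> real \<Rightarrow> real^'n2^'n1 \<Rightarrow> real^'n1^'n2 \<Rightarrow> real^('n1 + 'n2)^('n1 + 'n2)" where
  "W_sim g1 g2 A B = (\<chi> r c. (case (r, c) of
      (Inl i, Inl j) \<Rightarrow> (if i = j then 1 else 0)
    | (Inl i, Inr l) \<Rightarrow> - g1 * A $ i $ l
    | (Inr l, Inl i) \<Rightarrow> - g2 * B $ l $ i
    | (Inr l, Inr m) \<Rightarrow> (if l = m then 1 else 0)))"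

definition W_alt :: "real \<Rightarrow> real \<Rightarrow> real^'n2^'n1 \<Rightarrow> real^'n1^'n2 \<Rightarrow> real^('n1 + 'n2)^('n1 + 'n2)" where
  "W_alt g1 g2 A B = (\<chi> r c. (case (r, c) of
      (Inl i, Inl j) \<Rightarrow> (if i = j then 1 else 0)
    | (Inl i, Inr l) \<Rightarrow> - g1 * A $ i $ l
    | (Inr l, Inl i) \<Rightarrow> - g2 * B $ l $ i
    | (Inr l, Inr m) \<Rightarrow> (if l = m then 1 else 0) + g1 * g2 * (\<Sum>i\<in>UNIV. B $ l $ i * A $ i $ m)))"

definition step_of :: "real \<Rightarrow> real \<Rightarrow> ('n1 + 'n2) \<Rightarrow> real" where
  "step_of g1 g2 q = (case q of Inl _ \<Rightarrow> g1 | Inr _ \<Rightarrow> g2)"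

fun traj :: "real^'m^'m \<Rightarrow> real^'m \<Rightarrow> nat \<Rightarrow> real^'m" where
  "traj W x0 0 = x0"
| "traj W x0 (Suc k) = W *v traj W x0 k"

fun dtraj :: "real^'m^'m \<Rightarrow> real \<Rightarrow> 'm \<Rightarrow> (nat \<Rightarrow> real) \<Rightarrow> real^'m \<Rightarrow> nat \<Rightarrow> real^'m" where
  "dtraj W g q d x0 0 = x0"
| "dtraj W g q d x0 (Suc k) = W *v dtraj W g q d x0 k - (g * d k) *\<^sub>R axis q 1"

text \<open>Coordinate p is disturbance decoupled from coordinate q (p \<noteq> q), with gamma the
  step size of the owner of q.\<close>
definition dist_decoupled :: "real^'m^'m \<Rightarrow> real \<Rightarrow> 'm \<Rightarrow> 'm \<Rightarrow> bool" where
  "dist_decoupled W g p q \<longleftrightarrow> p \<noteq> q \<and>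
     (\<forall>x0 d k. dtraj W g q d x0 k $ p = traj W x0 k $ p)"

end

theory Submission
  imports Defs
begin

text \<open>With zero initial state and a unit impulse at time 0, the disturbed trajectory is
  -\<gamma> W^(k-1) e_q while the undisturbed one vanishes, so decoupling forces the (p,q) entries
  of W and W^2 to vanish. For both W_s and W_a, the entry of W^2 at (x_{1,j}, x_{1,i}) is
  \<gamma>1 \<gamma>2 (AB)_{ji}, and at (x_{2,j}, x_{2,i}) it is \<gamma>1 \<gamma>2 (BA)_{ji}, which for W_a is
  already the corresponding entry of W itself.\<close>

lemma sum_UNIV_sum_type:
  fixes f :: "'a::finite + 'b::finite \<Rightarrow> 'c::comm_monoid_add"
  shows "(\<Sum>x\<in>UNIV. f x) = (\<Sum>a\<in>UNIV. f (Inl a)) + (\<Sum>b\<in>UNIV. f (Inr b))"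
  by (subst UNIV_Plus_UNIV [symmetric], subst sum.Plus) (simp_all add: comp_def)

lemma traj_zero: "traj W 0 k = 0"
  by (induction k) auto

lemma dtraj_impulse_response:
  "dtraj W g q (\<lambda>k. if k = 0 then 1 else 0) 0 (Suc k) = - g *\<^sub>R (((*v) W ^^ k) (axis q 1))"
  by (induction k) (simp_all add: matrix_vector_mult_scaleR flip: scaleR_minus_left)

lemma dist_decoupled_impulse_response:
  assumes "dist_decoupled W g p q" and "g \<noteq> 0"
  shows "((*v) W ^^ k) (axis q 1) $ p = 0"
proof -
  have "dtraj W g q (\<lambda>k. if k = 0 then 1 else 0) 0 (Suc k) $ p = traj W 0 (Suc k) $ p"
    using assms(1) unfolding dist_decoupled_def by blast
  then show ?thesis
    using assms(2) by (simp only: dtraj_impulse_response traj_zero) simp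
qed

lemma dist_decoupled_entries:
  fixes W :: "real^'m^'m"
  assumes "dist_decoupled W g p q" and "g \<noteq> 0"
  shows "W $ p $ q = 0" and "(W ** W) $ p $ q = 0"
proof -
  have column_entry: "(M *v axis q 1) $ p = M $ p $ q" for M :: "real^'m^'m"
    by (simp add: matrix_vector_mult_basis column_def)
  have "((*v) W ^^ k) (axis q 1) $ p = 0" for k
    using dist_decoupled_impulse_response [OF assms] .
  from this [of 1] this [of 2] show "W $ p $ q = 0" and "(W ** W) $ p $ q = 0"
    by (simp_all add: numeral_2_eq_2 matrix_vector_mul_assoc column_entry)
qed

lemma sum_kronecker_delta_off_diagonal:
  "i \<noteq> j \<Longrightarrow> (\<Sum>a\<in>UNIV. (if a = i then 1 else 0) * (if j = a then 1 else 0)) = (0::real)"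
  by (intro sum.neutral) auto

lemma W_sim_square_Inl:
  "i \<noteq> j \<Longrightarrow> (W_sim g1 g2 A B ** W_sim g1 g2 A B) $ Inl j $ Inl i
     = g1 * g2 * (\<Sum>l\<in>UNIV. B $ l $ i * A $ j $ l)"
  by (simp add: matrix_matrix_mult_def sum_UNIV_sum_type W_sim_def sum_distrib_left mult_ac
      sum_kronecker_delta_off_diagonal)

lemma W_alt_square_Inl:
  "i \<noteq> j \<Longrightarrow> (W_alt g1 g2 A B ** W_alt g1 g2 A B) $ Inl j $ Inl i
     = g1 * g2 * (\<Sum>l\<in>UNIV. B $ l $ i * A $ j $ l)"
  by (simp add: matrix_matrix_mult_def sum_UNIV_sum_type W_alt_def sum_distrib_left mult_ac
      sum_kronecker_delta_off_diagonal)

lemma W_sim_square_Inr: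
  "i \<noteq> j \<Longrightarrow> (W_sim g1 g2 A B ** W_sim g1 g2 A B) $ Inr j $ Inr i
     = g1 * g2 * (\<Sum>l\<in>UNIV. B $ j $ l * A $ l $ i)"
  by (simp add: matrix_matrix_mult_def sum_UNIV_sum_type W_sim_def sum_distrib_left mult_ac
      sum_kronecker_delta_off_diagonal)

lemma W_alt_Inr:
  "i \<noteq> j \<Longrightarrow> W_alt g1 g2 A B $ Inr j $ Inr i = g1 * g2 * (\<Sum>l\<in>UNIV. B $ j $ l * A $ l $ i)"
  by (simp add: W_alt_def)

theorem corollary3:
  fixes A :: "real^'n2^'n1" and B :: "real^'n1^'n2" and g1 g2 :: real
    and W :: "real^('n1 + 'n2)^('n1 + 'n2)"
  assumes "g1 > 0" and "g2 > 0"
    and "W = W_sim g1 g2 A B \<or> W = W_alt g1 g2 A B"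
  shows "(\<forall>i j. i \<noteq> j \<longrightarrow> dist_decoupled W (step_of g1 g2 (Inl i)) (Inl j) (Inl i)
              \<longrightarrow> (\<Sum>l\<in>UNIV. B $ l $ i * A $ j $ l) = 0)
       \<and> (\<forall>i j. i \<noteq> j \<longrightarrow> dist_decoupled W (step_of g1 g2 (Inr i)) (Inr j) (Inr i)
              \<longrightarrow> (\<Sum>l\<in>UNIV. B $ j $ l * A $ l $ i) = 0)"
proof (intro conjI allI impI)
  fix i j :: 'n1
  assume "i \<noteq> j" and "dist_decoupled W (step_of g1 g2 (Inl i)) (Inl j) (Inl i)"
  then have "(W ** W) $ Inl j $ Inl i = 0"
    using dist_decoupled_entries(2) [of W g1] assms(1) by (simp add: step_of_def)
  with \<open>i \<noteq> j\<close> assms show "(\<Sum>l\<in>UNIV. B $ l $ i * A $ j $ l) = 0"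
    by (auto simp: W_sim_square_Inl W_alt_square_Inl)
next
  fix i j :: 'n2
  assume "i \<noteq> j" and "dist_decoupled W (step_of g1 g2 (Inr i)) (Inr j) (Inr i)"
  then have "W $ Inr j $ Inr i = 0" and "(W ** W) $ Inr j $ Inr i = 0"
    using dist_decoupled_entries [of W g2] assms(2) by (simp_all add: step_of_def)
  with \<open>i \<noteq> j\<close> assms show "(\<Sum>l\<in>UNIV. B $ j $ l * A $ l $ i) = 0"
    by (auto simp: W_sim_square_Inr W_alt_Inr)
qed

end
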